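(* Let $\mathcal H$ be a family of graphs. The following are equivalent: (i) there is a constant $c=c(\mathcal H)$ such that every (not necessarily connected) $\mathcal H$-free graph $G$ has fewer than $c$ vertices $v$ for which $G[N(v)]$ has at least $2$ connected components; (ii) there is a positive integer $n$ such that $\mathcal H\le \{K_n^*,\ nP_3,\ K_{1,n}^*,\ K_{2,n},\ CK_n,\ T_n\}$.
   Context: All graphs are finite, simple, undirected. For graphs $H_1,H_2$, write $H_1\prec H_2$ if $H_2$ contains an induced subgraph isomorphic to $H_1$. A graph $G$ is $\mathcal H$-free if no $H\in\mathcal H$ satisfies $H\prec G$. For families $\mathcal H_1,\mathcal H_2$, write $\mathcal H_1\le\mathcal H_2$ if for every $H_2\in\mathcal H_2$ there is $H_1\in\mathcal H_1$ with $H_1\prec H_2$. $N(v)$ is the neighborhood and $G[S]$ the induced subgraph. $K_n$, $E_n$, $P_n$ are the complete graph, edgeless graph, and path on $n$ vertices; $K_{s,t}$ is the complete bipartite graph; $nG$ is the disjoint union of $n$ copies of $G$; $G_1+G_2$ is the join. $K_{1,n}^*$ is obtained from the star $K_{1,n}$ by attaching a new pendant vertex to each leaf; $K_n^*$ is obtained from $K_n$ by attaching a new pendant vertex to each vertex; $CK_n$ is obtained from two disjoint copies of $K_n$ by adding a perfect matching between them; $T_n$ is obtained from the join $K_n+E_n$ by adding one new vertex adjacent to exactly the $n$ vertices of $E_n$. *)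

theory Defs
  imports Main
begin

type_synonym 'a graph = "'a set \<times> ('a \<times> 'a) set"

definition verts :: "'a graph \<Rightarrow> 'a set" where "verts G = fst G"
definition edges :: "'a graph \<Rightarrow> ('a \<times> 'a) set" where "edges G = snd G"

definition wf_graph :: "'a graph \<Rightarrow> bool" where
  "wf_graph G \<longleftrightarrow> finite (verts G) \<and> edges G \<subseteq> verts G \<times> verts G
     \<and> (\<forall>x y. (x, y) \<in> edges G \<longrightarrow> (y, x) \<in> edges G)
     \<and> (\<forall>x. (x, x) \<notin> edges G)"

definition induced_sub :: "'a graph \<Rightarrow> 'b graph \<Rightarrow> bool" (infix "\<prec>" 50) where
  "H \<prec> G \<longleftrightarrow> (\<exists>f. inj_on f (verts H) \<and> f ` verts H \<subseteq> verts G \<and>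
      (\<forall>x\<in>verts H. \<forall>y\<in>verts H. ((x, y) \<in> edges H \<longleftrightarrow> (f x, f y) \<in> edges G)))"

definition H_free :: "'a graph set \<Rightarrow> 'b graph \<Rightarrow> bool" where
  "H_free \<H> G \<longleftrightarrow> (\<forall>H\<in>\<H>. \<not> H \<prec> G)"

definition family_le :: "'a graph set \<Rightarrow> 'b graph set \<Rightarrow> bool" where
  "family_le \<H>1 \<H>2 \<longleftrightarrow> (\<forall>H2\<in>\<H>2. \<exists>H1\<in>\<H>1. H1 \<prec> H2)"

definition nbhd :: "'a graph \<Rightarrow> 'a \<Rightarrow> 'a set" where
  "nbhd G v = {u \<in> verts G. (v, u) \<in> edges G}"

definition induced :: "'a graph \<Rightarrow> 'a set \<Rightarrow> 'a graph" where
  "induced G S = (S, edges G \<inter> (S \<times> S))"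

definition components :: "'a graph \<Rightarrow> 'a set set" where
  "components G = (\<lambda>x. {y \<in> verts G. (x, y) \<in> (edges G \<inter> (verts G \<times> verts G))\<^sup>*}) ` verts G"

definition mk_graph :: "nat set \<Rightarrow> (nat \<Rightarrow> nat \<Rightarrow> bool) \<Rightarrow> nat graph" where
  "mk_graph V P = (V, {(x, y). x \<in> V \<and> y \<in> V \<and> x \<noteq> y \<and> (P x y \<or> P y x)})"

text \<open>K_n^*: clique on 0..n-1, pendant vertex i+n attached to i.\<close>
definition Kstar :: "nat \<Rightarrow> nat graph" where
  "Kstar n = mk_graph {..<2*n} (\<lambda>x y. (x < n \<and> y < n) \<or> (x < n \<and> y = x + n))"

text \<open>n P_3: paths 3k - 3k+1 - 3k+2 for k < n.\<close>
definition nP3 :: "nat \<Rightarrow> nat graph" where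
  "nP3 n = mk_graph {..<3*n} (\<lambda>x y. x div 3 = y div 3 \<and> x mod 3 = 1)"

text \<open>K_{1,n}^*: centre 0, leaves 1..n, pendant i+n attached to leaf i.\<close>
definition K1nstar :: "nat \<Rightarrow> nat graph" where
  "K1nstar n = mk_graph {..2*n} (\<lambda>x y. (x = 0 \<and> 1 \<le> y \<and> y \<le> n) \<or> (1 \<le> x \<and> x \<le> n \<and> y = x + n))"

definition K2n :: "nat \<Rightarrow> nat graph" where
  "K2n n = mk_graph {..n+1} (\<lambda>x y. x < 2 \<and> 2 \<le> y)"

text \<open>CK_n: cliques on {0..<n} and {n..<2n} plus matching i -- i+n.\<close>
definition CK :: "nat \<Rightarrow> nat graph" where
  "CK n = mk_graph {..<2*n} (\<lambda>x y. (x < n \<and> y < n) \<or> (n \<le> x \<and> n \<le> y) \<or> (x < n \<and> y = x + n))"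

text \<open>T_n: K_n on {0..<n} joined to E_n on {n..<2n}, plus vertex 2n adjacent to {n..<2n}.\<close>
definition Tn :: "nat \<Rightarrow> nat graph" where
  "Tn n = mk_graph {..2*n} (\<lambda>x y. (x < n \<and> y < n) \<or> (x < n \<and> n \<le> y \<and> y < 2*n)
                              \<or> (n \<le> x \<and> x < 2*n \<and> y = 2*n))"

end

theory Submission
  imports Defs "HOL-Library.Ramsey"
begin

text \<open>
  Call a vertex v bad if G[N(v)] is disconnected. A neighbour a of a bad vertex v has a
  neighbour w of v in another component of G[N(v)]; then w is adjacent neither to a nor to any
  neighbour of a inside N(v). Each of the six listed graphs has at least n bad vertices, which
  gives (i) \<Longrightarrow> (ii) with n = c + 2. Conversely, Ramsey's theorem turns many bad vertices into a
  long sequence of them that is a clique or an independent set. To each member we attach one or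
  two neighbours chosen in this way, and a second application of Ramsey's theorem makes all
  adjacencies between members and attached vertices depend only on the order of the indices;
  each of the resulting patterns contains an induced K_n^*, nP_3, K_{1,n}^*, K_{2,n} or CK_n.
\<close>


section \<open>Induced embeddings\<close>

lemma wf_graph_edge_sym: "wf_graph G \<Longrightarrow> (x, y) \<in> edges G \<Longrightarrow> (y, x) \<in> edges G"
  by (simp add: wf_graph_def)

lemma wf_graph_edge_irrefl: "wf_graph G \<Longrightarrow> (x, x) \<notin> edges G"
  by (simp add: wf_graph_def)

lemma wf_graph_edge_verts: "wf_graph G \<Longrightarrow> (x, y) \<in> edges G \<Longrightarrow> x \<in> verts G \<and> y \<in> verts G"
  by (auto simp: wf_graph_def)

lemma verts_mk_graph [simp]: "verts (mk_graph V P) = V"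
  by (simp add: mk_graph_def verts_def)

lemma edges_mk_graph [simp]:
  "edges (mk_graph V P) = {(x, y). x \<in> V \<and> y \<in> V \<and> x \<noteq> y \<and> (P x y \<or> P y x)}"
  by (simp add: mk_graph_def edges_def)

lemma wf_graph_mk_graph: "finite V \<Longrightarrow> wf_graph (mk_graph V P)"
  by (auto simp: wf_graph_def)

lemma induced_sub_trans:
  assumes "induced_sub A B" "induced_sub B C"
  shows "induced_sub A C"
proof -
  obtain f where f: "inj_on f (verts A)" "f ` verts A \<subseteq> verts B"
    "\<forall>x\<in>verts A. \<forall>y\<in>verts A. (x, y) \<in> edges A \<longleftrightarrow> (f x, f y) \<in> edges B"
    using assms(1) unfolding induced_sub_def by blast
  obtain g where g: "inj_on g (verts B)" "g ` verts B \<subseteq> verts C"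
    "\<forall>x\<in>verts B. \<forall>y\<in>verts B. (x, y) \<in> edges B \<longleftrightarrow> (g x, g y) \<in> edges C"
    using assms(2) unfolding induced_sub_def by blast
  show ?thesis
    unfolding induced_sub_def
    by (rule exI[of _ "g \<circ> f"]) (use f g in \<open>auto simp: inj_on_def subset_iff\<close>)
qed

lemma mk_graph_induced_subI:
  assumes G: "wf_graph G" and "inj_on f V" "f ` V \<subseteq> verts G"
    and "\<And>x y. x \<in> V \<Longrightarrow> y \<in> V \<Longrightarrow> x \<noteq> y \<Longrightarrow> (f x, f y) \<in> edges G \<longleftrightarrow> P x y \<or> P y x"
  shows "induced_sub (mk_graph V P) G"
  unfolding induced_sub_def using assms wf_graph_edge_irrefl[OF G] by (intro exI[of _ f]) auto

lemma Kstar_induced_subI: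
  assumes G: "wf_graph G" and "c ` {..<n} \<subseteq> verts G" "p ` {..<n} \<subseteq> verts G"
    and cc: "\<And>i j. i < n \<Longrightarrow> j < n \<Longrightarrow> (c i, c j) \<in> edges G \<longleftrightarrow> i \<noteq> j"
    and pp: "\<And>i j. i < n \<Longrightarrow> j < n \<Longrightarrow> (p i, p j) \<notin> edges G"
    and cp: "\<And>i j. i < n \<Longrightarrow> j < n \<Longrightarrow> (c i, p j) \<in> edges G \<longleftrightarrow> i = j"
  shows "induced_sub (Kstar n) G"
proof -
  have pc: "(p j, c i) \<in> edges G \<longleftrightarrow> i = j" if "i < n" "j < n" for i j
    using cp[OF that] wf_graph_edge_sym[OF G] by blast
  have c_inj: "c i = c j \<longleftrightarrow> i = j" if "i < n" "j < n" for i j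
    using cc[OF that] wf_graph_edge_irrefl[OF G] by auto
  have p_inj: "p i = p j \<longleftrightarrow> i = j" if "i < n" "j < n" for i j
    using cp[of i i] cp[of i j] that by auto
  have c_ne_p: "c i \<noteq> p j" if "i < n" "j < n" for i j
    using cp[of i i] pp[of j i] cp[of j j] cc[of j i] pc[of j j] that wf_graph_edge_irrefl[OF G]
    by metis
  define f where "f x = (if x < n then c x else p (x - n))" for x
  show ?thesis
    unfolding Kstar_def
  proof (rule mk_graph_induced_subI[OF G])
    show "inj_on f {..<2 * n}"
      by (rule inj_onI) (auto simp: f_def c_inj p_inj c_ne_p c_ne_p[symmetric] split: if_splits)
    show "f ` {..<2 * n} \<subseteq> verts G"
      using assms(2,3) by (auto simp: f_def)
    show "(f x, f y) \<in> edges G \<longleftrightarrow>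
        (x < n \<and> y < n \<or> x < n \<and> y = x + n) \<or> (y < n \<and> x < n \<or> y < n \<and> x = y + n)"
      if "x \<in> {..<2 * n}" "y \<in> {..<2 * n}" "x \<noteq> y" for x y
      using that by (auto simp: f_def cc cp pc pp)
  qed
qed

lemma CK_induced_subI:
  assumes G: "wf_graph G" and "c ` {..<n} \<subseteq> verts G" "p ` {..<n} \<subseteq> verts G"
    and cc: "\<And>i j. i < n \<Longrightarrow> j < n \<Longrightarrow> (c i, c j) \<in> edges G \<longleftrightarrow> i \<noteq> j"
    and pp: "\<And>i j. i < n \<Longrightarrow> j < n \<Longrightarrow> (p i, p j) \<in> edges G \<longleftrightarrow> i \<noteq> j"
    and cp: "\<And>i j. i < n \<Longrightarrow> j < n \<Longrightarrow> (c i, p j) \<in> edges G \<longleftrightarrow> i = j"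
    and c_ne_p: "\<And>i j. i < n \<Longrightarrow> j < n \<Longrightarrow> c i \<noteq> p j"
  shows "induced_sub (CK n) G"
proof -
  have pc: "(p j, c i) \<in> edges G \<longleftrightarrow> i = j" if "i < n" "j < n" for i j
    using cp[OF that] wf_graph_edge_sym[OF G] by blast
  have c_inj: "c i = c j \<longleftrightarrow> i = j" and p_inj: "p i = p j \<longleftrightarrow> i = j" if "i < n" "j < n" for i j
    using cc[OF that] pp[OF that] wf_graph_edge_irrefl[OF G] by auto
  define f where "f x = (if x < n then c x else p (x - n))" for x
  show ?thesis
    unfolding CK_def
  proof (rule mk_graph_induced_subI[OF G])
    show "inj_on f {..<2 * n}"
      by (rule inj_onI) (auto simp: f_def c_inj p_inj c_ne_p c_ne_p[symmetric] split: if_splits)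
    show "f ` {..<2 * n} \<subseteq> verts G"
      using assms(2,3) by (auto simp: f_def)
    show "(f x, f y) \<in> edges G \<longleftrightarrow> (x < n \<and> y < n \<or> n \<le> x \<and> n \<le> y \<or> x < n \<and> y = x + n)
        \<or> (y < n \<and> x < n \<or> n \<le> y \<and> n \<le> x \<or> y < n \<and> x = y + n)"
      if "x \<in> {..<2 * n}" "y \<in> {..<2 * n}" "x \<noteq> y" for x y
      using that by (auto simp: f_def cc cp pc pp)
  qed
qed

lemma K2n_induced_subI:
  assumes G: "wf_graph G" and "u \<in> verts G" "v \<in> verts G" "s ` {..<n} \<subseteq> verts G"
    and uv: "u \<noteq> v" "(u, v) \<notin> edges G"
    and us: "\<And>i. i < n \<Longrightarrow> (u, s i) \<in> edges G" and vs: "\<And>i. i < n \<Longrightarrow> (v, s i) \<in> edges G"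
    and ss: "\<And>i j. i < n \<Longrightarrow> j < n \<Longrightarrow> (s i, s j) \<notin> edges G"
    and s_inj: "inj_on s {..<n}"
  shows "induced_sub (K2n n) G"
proof -
  have su: "(s i, u) \<in> edges G" "(s i, v) \<in> edges G" if "i < n" for i
    using us[OF that] vs[OF that] wf_graph_edge_sym[OF G] by blast+
  have vu: "(v, u) \<notin> edges G"
    using uv(2) wf_graph_edge_sym[OF G] by blast
  have s_ne: "s i \<noteq> u" "s i \<noteq> v" if "i < n" for i
    using us[OF that] vs[OF that] wf_graph_edge_irrefl[OF G] by auto
  define f where "f x = (if x = 0 then u else if x = 1 then v else s (x - 2))" for x
  have f_cases: "x = 0 \<and> f x = u \<or> x = 1 \<and> f x = v \<or> (\<exists>i<n. x = i + 2 \<and> f x = s i)"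
    if "x \<in> {..n + 1}" for x
    using that by (auto simp: f_def intro!: exI[of _ "x - 2"])
  show ?thesis
    unfolding K2n_def
  proof (rule mk_graph_induced_subI[OF G])
    show "inj_on f {..n + 1}"
      using f_cases uv(1) s_ne inj_onD[OF s_inj]
      by (intro inj_onI) (metis lessThan_iff add_right_cancel)
    show "f ` {..n + 1} \<subseteq> verts G"
      using f_cases assms(2-4) by fastforce
    show "(f x, f y) \<in> edges G \<longleftrightarrow> (x < 2 \<and> 2 \<le> y) \<or> (y < 2 \<and> 2 \<le> x)"
      if "x \<in> {..n + 1}" "y \<in> {..n + 1}" "x \<noteq> y" for x y
      using f_cases[OF that(1)] f_cases[OF that(2)] that(3) uv vu us vs su ss by auto
  qed
qed

lemma K1nstar_induced_subI:
  assumes G: "wf_graph G" and "z \<in> verts G" "c ` {..<n} \<subseteq> verts G" "p ` {..<n} \<subseteq> verts G"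
    and zc: "\<And>i. i < n \<Longrightarrow> (z, c i) \<in> edges G"
    and zp: "\<And>i. i < n \<Longrightarrow> (z, p i) \<notin> edges G \<and> z \<noteq> p i"
    and cc: "\<And>i j. i < n \<Longrightarrow> j < n \<Longrightarrow> (c i, c j) \<notin> edges G"
    and pp: "\<And>i j. i < n \<Longrightarrow> j < n \<Longrightarrow> (p i, p j) \<notin> edges G"
    and cp: "\<And>i j. i < n \<Longrightarrow> j < n \<Longrightarrow> (c i, p j) \<in> edges G \<longleftrightarrow> i = j"
  shows "induced_sub (K1nstar n) G"
proof -
  have cz: "(c i, z) \<in> edges G" and pz: "(p i, z) \<notin> edges G" if "i < n" for i
    using zc[OF that] zp[OF that] wf_graph_edge_sym[OF G] by blast+
  have pc: "(p j, c i) \<in> edges G \<longleftrightarrow> i = j" if "i < n" "j < n" for i j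
    using cp[OF that] wf_graph_edge_sym[OF G] by blast
  have c_inj: "c i = c j \<longleftrightarrow> i = j" if "i < n" "j < n" for i j
    using cp[of i i] cp[of j i] that by metis
  have p_inj: "p i = p j \<longleftrightarrow> i = j" if "i < n" "j < n" for i j
    using cp[of i i] cp[of i j] that by metis
  have c_ne: "c i \<noteq> p j" "c i \<noteq> z" if "i < n" "j < n" for i j
    using zc[OF that(1)] zp[OF that(2)] wf_graph_edge_irrefl[OF G] by auto
  define f where "f x = (if x = 0 then z else if x \<le> n then c (x - 1) else p (x - n - 1))" for x
  have f_cases:
    "x = 0 \<and> f x = z \<or> (\<exists>i<n. x = i + 1 \<and> f x = c i) \<or> (\<exists>i<n. x = i + n + 1 \<and> f x = p i)"
    if "x \<in> {..2 * n}" for x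
  proof (cases "x = 0 \<or> x \<le> n")
    case True
    then show ?thesis
      using that by (cases x) (auto simp: f_def)
  next
    case False
    then have "x - n - 1 < n" "x = (x - n - 1) + n + 1"
      using that by auto
    then show ?thesis
      using False f_def by metis
  qed
  show ?thesis
    unfolding K1nstar_def
  proof (rule mk_graph_induced_subI[OF G])
    show "inj_on f {..2 * n}"
    proof (rule inj_onI)
      show "x = y" if "x \<in> {..2 * n}" "y \<in> {..2 * n}" "f x = f y" for x y
        using f_cases[OF that(1)] f_cases[OF that(2)] that(3)
        by (elim disjE exE conjE)
          (auto simp: c_inj p_inj c_ne zp c_ne[symmetric] zp[THEN conjunct2, symmetric])
    qed
    show "f ` {..2 * n} \<subseteq> verts G"
    proof (rule image_subsetI)
      show "f x \<in> verts G" if "x \<in> {..2 * n}" for x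
        using f_cases[OF that] assms(2-4) by auto
    qed
    show "(f x, f y) \<in> edges G \<longleftrightarrow> (x = 0 \<and> 1 \<le> y \<and> y \<le> n \<or> 1 \<le> x \<and> x \<le> n \<and> y = x + n)
        \<or> (y = 0 \<and> 1 \<le> x \<and> x \<le> n \<or> 1 \<le> y \<and> y \<le> n \<and> x = y + n)"
      if "x \<in> {..2 * n}" "y \<in> {..2 * n}" "x \<noteq> y" for x y
      using f_cases[OF that(1)] f_cases[OF that(2)] that(3)
      by (elim disjE exE conjE) (auto simp: zc zp cz pz cc pp cp pc wf_graph_edge_irrefl[OF G])
  qed
qed

lemma nP3_induced_subI:
  assumes G: "wf_graph G"
    and "a ` {..<n} \<subseteq> verts G" "m ` {..<n} \<subseteq> verts G" "b ` {..<n} \<subseteq> verts G"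
    and ma: "\<And>i. i < n \<Longrightarrow> (m i, a i) \<in> edges G" and mb: "\<And>i. i < n \<Longrightarrow> (m i, b i) \<in> edges G"
    and ab: "\<And>i. i < n \<Longrightarrow> (a i, b i) \<notin> edges G \<and> a i \<noteq> b i"
    and apart: "\<And>i j x y. i < n \<Longrightarrow> j < n \<Longrightarrow> i \<noteq> j \<Longrightarrow> x \<in> {a i, m i, b i} \<Longrightarrow>
      y \<in> {a j, m j, b j} \<Longrightarrow> (x, y) \<notin> edges G"
  shows "induced_sub (nP3 n) G"
proof -
  have am: "(a i, m i) \<in> edges G" and bm: "(b i, m i) \<in> edges G" and ba: "(b i, a i) \<notin> edges G"
    if "i < n" for i
    using ma[OF that] mb[OF that] ab[OF that] wf_graph_edge_sym[OF G] by blast+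
  have m_ne: "m i \<noteq> a i" "m i \<noteq> b i" if "i < n" for i
    using ma[OF that] mb[OF that] wf_graph_edge_irrefl[OF G] by auto
  have disjoint: "x \<noteq> y" if ij: "i < n" "j < n" "i \<noteq> j"
    and x: "x \<in> {a i, m i, b i}" and y: "y \<in> {a j, m j, b j}" for i j x y
  proof
    assume "x = y"
    obtain w where "w \<in> {a i, m i, b i}" "(w, x) \<in> edges G"
      using x ma[OF ij(1)] mb[OF ij(1)] am[OF ij(1)] by blast
    then show False
      using apart[OF ij] y \<open>x = y\<close> by blast
  qed
  define f where
    "f x = (if x mod 3 = 0 then a (x div 3) else if x mod 3 = 1 then m (x div 3)
      else b (x div 3))" for x
  have f_mem: "f x \<in> {a (x div 3), m (x div 3), b (x div 3)}" for x
    by (simp add: f_def)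
  show ?thesis
    unfolding nP3_def
  proof (rule mk_graph_induced_subI[OF G])
    show "inj_on f {..<3 * n}"
    proof (rule inj_onI)
      fix x y
      assume x: "x \<in> {..<3 * n}" and y: "y \<in> {..<3 * n}" and f: "f x = f y"
      have div: "x div 3 = y div 3"
        using disjoint[of "x div 3" "y div 3" "f x" "f y"] f_mem[of x] f_mem[of y] x y f
        by fastforce
      have "x div 3 < n"
        using x by auto
      then have "x mod 3 = y mod 3"
        using f div m_ne[of "x div 3"] ab[of "x div 3"]
          mod_less_divisor[of 3 x] mod_less_divisor[of 3 y]
        by (auto simp: f_def split: if_splits)
      with div show "x = y"
        by (metis div_mult_mod_eq)
    qed
    show "f ` {..<3 * n} \<subseteq> verts G"
      using assms(2-4) by (auto simp: f_def)
    show "(f x, f y) \<in> edges G \<longleftrightarrow>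
        (x div 3 = y div 3 \<and> x mod 3 = 1) \<or> (y div 3 = x div 3 \<and> y mod 3 = 1)"
      if "x \<in> {..<3 * n}" "y \<in> {..<3 * n}" "x \<noteq> y" for x y
    proof (cases "x div 3 = y div 3")
      case True
      have "x div 3 < n" "x mod 3 \<noteq> y mod 3"
        using that True div_mult_mod_eq[of x 3] div_mult_mod_eq[of y 3] by auto
      then show ?thesis
        using True ma mb ab am bm ba mod_less_divisor[of 3 x] mod_less_divisor[of 3 y]
        by (auto simp: f_def split: if_splits)
    next
      case False
      then show ?thesis
        using apart[of "x div 3" "y div 3" "f x" "f y"] f_mem[of x] f_mem[of y] that by auto
    qed
  qed
qed

section \<open>Vertices with a disconnected neighbourhood\<close>

definition link_edges :: "'a graph \<Rightarrow> 'a \<Rightarrow> ('a \<times> 'a) set" where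
  "link_edges G v = edges G \<inter> (nbhd G v \<times> nbhd G v)"

definition bad_verts :: "'a graph \<Rightarrow> 'a set" where
  "bad_verts G = {v \<in> verts G. card (components (induced G (nbhd G v))) \<ge> 2}"

lemma components_induced_nbhd:
  "components (induced G (nbhd G v)) = (\<lambda>a. {b \<in> nbhd G v. (a, b) \<in> (link_edges G v)\<^sup>*}) ` nbhd G v"
proof -
  have "edges (induced G (nbhd G v)) \<inter> (nbhd G v \<times> nbhd G v) = link_edges G v"
    by (auto simp: induced_def edges_def link_edges_def)
  then show ?thesis
    by (simp add: components_def induced_def verts_def)
qed

lemma two_le_card_iff: "finite A \<Longrightarrow> 2 \<le> card A \<longleftrightarrow> (\<exists>x\<in>A. \<exists>y\<in>A. x \<noteq> y)"
proof
  assume "finite A" "2 \<le> card A"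
  then obtain x where "x \<in> A"
    by fastforce
  moreover have "\<not> A \<subseteq> {x}"
    using \<open>2 \<le> card A\<close> card_mono[of "{x}" A] by auto
  ultimately show "\<exists>x\<in>A. \<exists>y\<in>A. x \<noteq> y"
    by blast
next
  assume "finite A" "\<exists>x\<in>A. \<exists>y\<in>A. x \<noteq> y"
  then show "2 \<le> card A"
    using card_mono[of A "{x, y}" for x y] by fastforce
qed

lemma link_rtrancl_sym:
  assumes "wf_graph G" "(a, b) \<in> (link_edges G v)\<^sup>*"
  shows "(b, a) \<in> (link_edges G v)\<^sup>*"
proof -
  have "sym (link_edges G v)"
    using assms(1) by (auto simp: sym_def link_edges_def wf_graph_def)
  then show ?thesis
    using assms(2) sym_rtrancl symD by metis
qed

lemma bad_verts_iff:
  assumes G: "wf_graph G"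
  shows "v \<in> bad_verts G \<longleftrightarrow>
    v \<in> verts G \<and> (\<exists>a\<in>nbhd G v. \<exists>b\<in>nbhd G v. (a, b) \<notin> (link_edges G v)\<^sup>*)"
proof -
  define C where "C a = {b \<in> nbhd G v. (a, b) \<in> (link_edges G v)\<^sup>*}" for a
  have C_eq: "C a = C b \<longleftrightarrow> (a, b) \<in> (link_edges G v)\<^sup>*" if "b \<in> nbhd G v" for a b
    using that link_rtrancl_sym[OF G] unfolding C_def by (auto intro: rtrancl_trans)
  have "finite (C ` nbhd G v)"
    using G by (auto simp: wf_graph_def nbhd_def)
  then have "2 \<le> card (C ` nbhd G v) \<longleftrightarrow> (\<exists>a\<in>nbhd G v. \<exists>b\<in>nbhd G v. C a \<noteq> C b)"
    by (auto simp: two_le_card_iff)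
  then show ?thesis
    unfolding bad_verts_def components_induced_nbhd using C_eq by (simp add: C_def)
qed

lemma finite_bad_verts: "wf_graph G \<Longrightarrow> finite (bad_verts G)"
  by (simp add: bad_verts_def wf_graph_def)

lemma unlinked_nonadjacent:
  assumes "(a, b) \<notin> (link_edges G v)\<^sup>*" "a \<in> nbhd G v" "b \<in> nbhd G v" "u \<in> nbhd G v"
    and "u = a \<or> (a, u) \<in> edges G"
  shows "(u, b) \<notin> edges G \<and> u \<noteq> b"
proof -
  have "(a, u) \<in> (link_edges G v)\<^sup>*"
    using assms(2,4,5) by (auto simp: link_edges_def)
  then show ?thesis
    using assms(1,3,4) rtrancl_into_rtrancl[of a u "link_edges G v" b]
    by (auto simp: link_edges_def)
qed

lemma bad_verts_unlinked_nbrs: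
  assumes G: "wf_graph G" and "J \<subseteq> bad_verts G" and x: "\<And>v. v \<in> J \<Longrightarrow> x v \<in> nbhd G v"
  obtains w where "\<And>v. v \<in> J \<Longrightarrow> w v \<in> nbhd G v \<and> (x v, w v) \<notin> (link_edges G v)\<^sup>*"
proof -
  have "\<forall>v\<in>J. \<exists>w. w \<in> nbhd G v \<and> (x v, w) \<notin> (link_edges G v)\<^sup>*"
  proof
    fix v assume "v \<in> J"
    then obtain a b where "a \<in> nbhd G v" "b \<in> nbhd G v" "(a, b) \<notin> (link_edges G v)\<^sup>*"
      using assms(2) bad_verts_iff[OF G] by blast
    then show "\<exists>w. w \<in> nbhd G v \<and> (x v, w) \<notin> (link_edges G v)\<^sup>*"
      using link_rtrancl_sym[OF G] rtrancl_trans by metis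
  qed
  then show ?thesis
    using that by (elim bchoice[elim_format]) blast
qed

lemma bad_verts_nonadjacent_nbr_pairs:
  assumes G: "wf_graph G" and "I \<subseteq> bad_verts G"
  obtains a b where
    "\<And>v. v \<in> I \<Longrightarrow> a v \<in> nbhd G v \<and> b v \<in> nbhd G v \<and> (a v, b v) \<notin> edges G \<and> a v \<noteq> b v"
proof -
  have "\<forall>v\<in>I. \<exists>a. a \<in> nbhd G v"
    using assms(2) bad_verts_iff[OF G] by blast
  then obtain a where a: "\<And>v. v \<in> I \<Longrightarrow> a v \<in> nbhd G v"
    by (elim bchoice[elim_format]) blast
  obtain b where b: "\<And>v. v \<in> I \<Longrightarrow> b v \<in> nbhd G v \<and> (a v, b v) \<notin> (link_edges G v)\<^sup>*"
    using bad_verts_unlinked_nbrs[OF G assms(2) a] by blast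
  have "(a v, b v) \<notin> edges G \<and> a v \<noteq> b v" if "v \<in> I" for v
    using unlinked_nonadjacent[of "a v" "b v" G v "a v"] a[OF that] b[OF that] by blast
  then show ?thesis
    using that a b by blast
qed

lemma bad_vertI:
  assumes G: "wf_graph G" and "v \<in> verts G" "a \<in> nbhd G v" "b \<in> nbhd G v" "a \<noteq> b"
    and pendant: "\<forall>u\<in>nbhd G v. (a, u) \<notin> edges G"
  shows "v \<in> bad_verts G"
proof -
  have "(a, b) \<notin> (link_edges G v)\<^sup>*"
  proof
    assume "(a, b) \<in> (link_edges G v)\<^sup>*"
    then show False
      using \<open>a \<noteq> b\<close> pendant by (cases rule: converse_rtranclE) (auto simp: link_edges_def)
  qed
  then show ?thesis
    using bad_verts_iff[OF G] assms(2-4) by blast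
qed

lemma mk_graph_bad_vertI:
  assumes "finite V" "v \<in> V" "a \<in> V" "b \<in> V" "a \<noteq> v" "b \<noteq> v" "a \<noteq> b"
    and "P v a \<or> P a v" "P v b \<or> P b v"
    and "\<And>u. u \<in> V \<Longrightarrow> u \<noteq> a \<Longrightarrow> u \<noteq> v \<Longrightarrow> P a u \<or> P u a \<Longrightarrow> \<not> (P v u \<or> P u v)"
  shows "v \<in> bad_verts (mk_graph V P)"
  by (rule bad_vertI[where a = a and b = b]) (use assms in \<open>auto simp: wf_graph_mk_graph nbhd_def\<close>)

section \<open>Homogeneous sequences\<close>

lemma ramsey_homogeneous_sequence:
  fixes k :: nat
  obtains N where "\<And>(S :: 'a set) (col :: 'a \<Rightarrow> 'a \<Rightarrow> 'c::finite). finite S \<Longrightarrow> N \<le> card S \<Longrightarrow>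
    \<exists>s c. inj_on s {..<k} \<and> s ` {..<k} \<subseteq> S \<and> (\<forall>i j. i < j \<longrightarrow> j < k \<longrightarrow> col (s i) (s j) = c)"
proof -
  obtain N :: nat where N: "partn_lst {..<N} (replicate (card (UNIV :: 'c set)) k) 2"
    using ramsey_full by blast
  obtain g :: "'c \<Rightarrow> nat" where g: "bij_betw g UNIV {0..<card (UNIV :: 'c set)}"
    using ex_bij_betw_finite_nat finite_UNIV by blast
  have "\<exists>s c. inj_on s {..<k} \<and> s ` {..<k} \<subseteq> S \<and> (\<forall>i j. i < j \<longrightarrow> j < k \<longrightarrow> col (s i) (s j) = c)"
    if S: "finite S" "N \<le> card S" for S :: "'a set" and col :: "'a \<Rightarrow> 'a \<Rightarrow> 'c"
  proof -
    obtain e where e: "bij_betw e {0..<card S} S"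
      using ex_bij_betw_nat_finite S(1) by blast
    define f where "f A = g (col (e (Min A)) (e (Max A)))" for A
    have "f \<in> nsets {..<N} 2 \<rightarrow> {..<length (replicate (card (UNIV :: 'c set)) k)}"
      using g by (auto simp: f_def bij_betw_def)
    then obtain i H where H: "H \<in> nsets {..<N} k" and hom: "f ` nsets H 2 \<subseteq> {i}"
      using partn_lstE[OF N] by (metis length_replicate nth_replicate)
    then have "finite H" "card H = k" "H \<subseteq> {..<N}"
      by (auto simp: nsets_def)
    then obtain h where h: "bij_betw h {..<k} H" "strict_mono_on {..<k} h"
      using ex_bij_betw_strict_mono_card by metis
    have "g (col (e (h a)) (e (h b))) = i" if "a < b" "b < k" for a b
    proof -
      have "h a < h b"
        using h(2) that by (simp add: strict_mono_on_def)
      then have "{h a, h b} \<in> nsets H 2"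
        using h(1) that \<open>h a < h b\<close> by (auto simp: nsets_def bij_betw_def)
      then have "f {h a, h b} = i"
        using hom by blast
      with \<open>h a < h b\<close> show ?thesis
        by (simp add: f_def)
    qed
    then have "col (e (h a)) (e (h b)) = inv g i" if "a < b" "b < k" for a b
      using g that by (metis bij_betw_imp_inj_on inv_f_f)
    moreover have "h ` {..<k} \<subseteq> {0..<card S}"
      using h(1) \<open>H \<subseteq> {..<N}\<close> S(2) by (auto simp: bij_betw_def)
    then have "inj_on (e \<circ> h) {..<k}" "(e \<circ> h) ` {..<k} \<subseteq> S"
      using e h(1) by (auto simp: bij_betw_def intro: comp_inj_on inj_on_subset)
    ultimately show ?thesis
      by (intro exI[of _ "e \<circ> h"] exI[of _ "inv g i"]) auto
  qed
  then show ?thesis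
    using that by blast
qed

lemma homogeneous_edges_sym:
  fixes i j k :: nat
  assumes G: "wf_graph G" and hom: "\<And>i j. i < j \<Longrightarrow> j < k \<Longrightarrow> (x i, x j) \<in> edges G \<longleftrightarrow> \<beta>"
    and "i < k" "j < k" "i \<noteq> j"
  shows "(x i, x j) \<in> edges G \<longleftrightarrow> \<beta>"
proof (cases "i < j")
  case True
  then show ?thesis
    using hom assms(4) by blast
next
  case False
  then have "j < i"
    using assms(5) by simp
  then show ?thesis
    using hom[of j i] assms(3) wf_graph_edge_sym[OF G] by blast
qed

section \<open>Many bad vertices force an obstruction\<close>

definition unavoidable_graphs :: "nat \<Rightarrow> nat graph set" where
  "unavoidable_graphs n = {Kstar n, nP3 n, K1nstar n, K2n n, CK n}"

lemma matched_clique_unavoidable: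
  assumes G: "wf_graph G" and "c ` {..<n} \<subseteq> verts G" "p ` {..<n} \<subseteq> verts G"
    and cc: "\<And>i j. i < n \<Longrightarrow> j < n \<Longrightarrow> (c i, c j) \<in> edges G \<longleftrightarrow> i \<noteq> j"
    and pp: "\<And>i j. i < n \<Longrightarrow> j < n \<Longrightarrow> (p i, p j) \<in> edges G \<longleftrightarrow> i \<noteq> j \<and> \<beta>"
    and cp: "\<And>i j. i < n \<Longrightarrow> j < n \<Longrightarrow> (c i, p j) \<in> edges G \<longleftrightarrow> i = j"
    and "\<And>i j. i < n \<Longrightarrow> j < n \<Longrightarrow> c i \<noteq> p j"
  shows "\<exists>F\<in>unavoidable_graphs n. induced_sub F G"
proof (cases \<beta>)
  case True
  then have "induced_sub (CK n) G"
    using CK_induced_subI[OF assms(1-3) cc _ cp assms(7)] pp by simp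
  then show ?thesis
    by (auto simp: unavoidable_graphs_def)
next
  case False
  then have "induced_sub (Kstar n) G"
    using Kstar_induced_subI[OF assms(1-3) cc _ cp] pp by simp
  then show ?thesis
    by (auto simp: unavoidable_graphs_def)
qed

lemma clique_bad_verts_unavoidable:
  obtains R where "\<And>(G :: 'a graph) K. wf_graph G \<Longrightarrow> K \<subseteq> bad_verts G \<Longrightarrow> finite K \<Longrightarrow> R \<le> card K \<Longrightarrow>
    pairwise (\<lambda>u v. (u, v) \<in> edges G) K \<Longrightarrow> \<exists>F\<in>unavoidable_graphs n. induced_sub F G"
proof -
  obtain N where N: "\<And>(S :: 'a set) (col :: 'a \<Rightarrow> 'a \<Rightarrow> bool). finite S \<Longrightarrow> N \<le> card S \<Longrightarrow>
    \<exists>s c. inj_on s {..<n} \<and> s ` {..<n} \<subseteq> S \<and> (\<forall>i j. i < j \<longrightarrow> j < n \<longrightarrow> col (s i) (s j) = c)"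
    using ramsey_homogeneous_sequence[where k = n] by blast
  show ?thesis
  proof (rule that[of "max N 2"])
    fix G :: "'a graph" and K
    assume G: "wf_graph G" and bad: "K \<subseteq> bad_verts G" and "finite K" "max N 2 \<le> card K"
      and clique: "pairwise (\<lambda>u v. (u, v) \<in> edges G) K"
    have K_nbhd: "u \<in> nbhd G v" if "u \<in> K" "v \<in> K" "u \<noteq> v" for u v
      using clique that wf_graph_edge_verts[OF G] wf_graph_edge_sym[OF G]
      by (auto simp: nbhd_def pairwise_def)
    have "\<forall>v\<in>K. \<exists>u. u \<in> K - {v}"
      using \<open>finite K\<close> \<open>max N 2 \<le> card K\<close> two_le_card_iff[of K] by auto
    then obtain other where other: "\<And>v. v \<in> K \<Longrightarrow> other v \<in> K \<and> other v \<noteq> v"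
      by (elim bchoice[elim_format]) blast
    obtain w where w: "\<And>v. v \<in> K \<Longrightarrow> w v \<in> nbhd G v \<and> (other v, w v) \<notin> (link_edges G v)\<^sup>*"
      using bad_verts_unlinked_nbrs[OF G bad, of other] other K_nbhd by blast
    (* K - {v} is a clique inside N(v), hence lies in the component of other v. *)
    have w_apart: "(u, w v) \<notin> edges G \<and> u \<noteq> w v" if "u \<in> K" "v \<in> K" "u \<noteq> v" for u v
    proof -
      have "u = other v \<or> (other v, u) \<in> edges G"
        using clique other[OF that(2)] that by (auto simp: pairwise_def)
      then show ?thesis
        using unlinked_nonadjacent[of "other v" "w v" G v u] w[OF that(2)] other[OF that(2)]
          K_nbhd that by blast
    qed
    obtain s \<beta> where s: "inj_on s {..<n}" "s ` {..<n} \<subseteq> K"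
      and hom: "\<And>i j. i < j \<Longrightarrow> j < n \<Longrightarrow> (w (s i), w (s j)) \<in> edges G \<longleftrightarrow> \<beta>"
      using N[of K "\<lambda>u v. (w u, w v) \<in> edges G"] \<open>finite K\<close> \<open>max N 2 \<le> card K\<close> by auto
    have s_ne: "s i \<noteq> s j" if "i < n" "j < n" "i \<noteq> j" for i j
      using s(1) that by (auto dest: inj_onD)
    show "\<exists>F\<in>unavoidable_graphs n. induced_sub F G"
    proof (rule matched_clique_unavoidable[OF G])
      show "s ` {..<n} \<subseteq> verts G" "(w \<circ> s) ` {..<n} \<subseteq> verts G"
        using s(2) bad w by (auto simp: bad_verts_def nbhd_def)
      show "(s i, s j) \<in> edges G \<longleftrightarrow> i \<noteq> j" if "i < n" "j < n" for i j
        using clique s(2) s_ne[OF that] wf_graph_edge_irrefl[OF G] that by (auto simp: pairwise_def)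
      show "((w \<circ> s) i, (w \<circ> s) j) \<in> edges G \<longleftrightarrow> i \<noteq> j \<and> \<beta>" if "i < n" "j < n" for i j
        using homogeneous_edges_sym[where x = "\<lambda>i. w (s i)" and k = n, OF G hom] that
          wf_graph_edge_irrefl[OF G] by (cases "i = j") auto
      show "(s i, (w \<circ> s) j) \<in> edges G \<longleftrightarrow> i = j" if "i < n" "j < n" for i j
        using w[of "s i"] w_apart[of "s i" "s j"] s(2) s_ne[OF that] that by (auto simp: nbhd_def)
      show "s i \<noteq> (w \<circ> s) j" if "i < n" "j < n" for i j
        using w[of "s i"] w_apart[of "s i" "s j"] s(2) s_ne[OF that] that wf_graph_edge_irrefl[OF G]
        by (cases "i = j") (auto simp: nbhd_def)
    qed
  qed
qed

lemma pendant_sequence_unavoidable: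
  assumes G: "wf_graph G" and verts: "x \<in> verts G" "s ` {..n} \<subseteq> verts G" "w ` {..n} \<subseteq> verts G"
    and s_inj: "inj_on s {..n}"
    and xs: "\<And>i. i \<le> n \<Longrightarrow> (x, s i) \<in> edges G"
    and xw: "\<And>i. i \<le> n \<Longrightarrow> (x, w i) \<notin> edges G \<and> x \<noteq> w i"
    and ss: "\<And>i j. i \<le> n \<Longrightarrow> j \<le> n \<Longrightarrow> (s i, s j) \<notin> edges G"
    and ws_self: "\<And>i. i \<le> n \<Longrightarrow> (w i, s i) \<in> edges G"
    and ws_later: "\<And>i j. i < j \<Longrightarrow> j \<le> n \<Longrightarrow> (w i, s j) \<in> edges G \<longleftrightarrow> \<beta>"
    and ws_earlier: "\<And>i j. i < j \<Longrightarrow> j \<le> n \<Longrightarrow> (w j, s i) \<in> edges G \<longleftrightarrow> \<gamma>"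
    and ww: "\<And>i j. i < j \<Longrightarrow> j \<le> n \<Longrightarrow> (w i, w j) \<in> edges G \<longleftrightarrow> \<delta>"
  shows "\<exists>F\<in>unavoidable_graphs n. induced_sub F G"
proof (cases "\<beta> \<or> \<gamma>")
  case True
  have "inj_on s {..<n}" "inj_on (\<lambda>i. s (Suc i)) {..<n}"
    using s_inj unfolding inj_on_def by (auto, metis Suc_inject Suc_leI atMost_iff)
  with True have "induced_sub (K2n n) G"
    by (elim disjE) (rule K2n_induced_subI[OF G, of x "w 0" "\<lambda>i. s (Suc i)"]
      K2n_induced_subI[OF G, of x "w n" s]; use verts xs xw ss ws_later ws_earlier in auto)+
  then show ?thesis
    by (auto simp: unavoidable_graphs_def)
next
  case False
  have ws: "(w i, s j) \<in> edges G \<longleftrightarrow> i = j" if "i \<le> n" "j \<le> n" for i j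
    using ws_self[OF that(1)] ws_later[of i j] ws_earlier[of j i] False that
    by (cases i j rule: linorder_cases) auto
  have sw: "(s i, w j) \<in> edges G \<longleftrightarrow> i = j" if "i \<le> n" "j \<le> n" for i j
    using ws[OF that(2,1)] wf_graph_edge_sym[OF G] by blast
  have ww': "(w i, w j) \<in> edges G \<longleftrightarrow> i \<noteq> j \<and> \<delta>" if "i < n" "j < n" for i j
    using homogeneous_edges_sym[where x = w and k = n, OF G] ww that wf_graph_edge_irrefl[OF G]
    by (cases "i = j") auto
  have verts': "s ` {..<n} \<subseteq> verts G" "w ` {..<n} \<subseteq> verts G"
    using verts by auto
  show ?thesis
  proof (cases \<delta>)
    case True
    show ?thesis
    proof (rule matched_clique_unavoidable[where \<beta> = False, OF G verts'(2,1)])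
      show "w i \<noteq> s j" if "i < n" "j < n" for i j
        using ws[of i i] ss[of j i] that by force
    qed (use ww' True ss ws in auto)
  next
    case False
    have "induced_sub (K1nstar n) G"
      by (rule K1nstar_induced_subI[OF G verts(1) verts'])
        (use xs xw ss ww' sw False in auto)
    then show ?thesis
      by (auto simp: unavoidable_graphs_def)
  qed
qed

lemma common_nbr_independent_bad_verts_unavoidable:
  obtains R where "\<And>(G :: 'a graph) x J. wf_graph G \<Longrightarrow> J \<subseteq> bad_verts G \<Longrightarrow> finite J \<Longrightarrow> R \<le> card J \<Longrightarrow>
    pairwise (\<lambda>u v. (u, v) \<notin> edges G) J \<Longrightarrow> J \<subseteq> nbhd G x \<Longrightarrow> \<exists>F\<in>unavoidable_graphs n. induced_sub F G"
proof -
  obtain N where N: "\<And>(S :: 'a set) (col :: 'a \<Rightarrow> 'a \<Rightarrow> bool \<times> bool \<times> bool). finite S \<Longrightarrow> N \<le> card S \<Longrightarrow>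
    \<exists>s c. inj_on s {..n} \<and> s ` {..n} \<subseteq> S \<and> (\<forall>i j. i < j \<longrightarrow> j \<le> n \<longrightarrow> col (s i) (s j) = c)"
    using ramsey_homogeneous_sequence[where k = "Suc n"] lessThan_Suc_atMost less_Suc_eq_le by metis
  show ?thesis
  proof (rule that[of N])
    fix G :: "'a graph" and x J
    assume G: "wf_graph G" and bad: "J \<subseteq> bad_verts G" and "finite J" "N \<le> card J"
      and indep: "pairwise (\<lambda>u v. (u, v) \<notin> edges G) J" and J_nbhd: "J \<subseteq> nbhd G x"
    have x_nbhd: "x \<in> nbhd G v" if "v \<in> J" for v
      using J_nbhd that wf_graph_edge_verts[OF G] wf_graph_edge_sym[OF G] by (auto simp: nbhd_def)
    obtain w where w: "\<And>v. v \<in> J \<Longrightarrow> w v \<in> nbhd G v \<and> (x, w v) \<notin> (link_edges G v)\<^sup>*"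
      using bad_verts_unlinked_nbrs[OF G bad, of "\<lambda>_. x"] x_nbhd by blast
    obtain s c where s: "inj_on s {..n}" "s ` {..n} \<subseteq> J"
      and hom: "\<forall>i j. i < j \<longrightarrow> j \<le> n \<longrightarrow>
        ((w (s i), s j) \<in> edges G, (w (s j), s i) \<in> edges G, (w (s i), w (s j)) \<in> edges G) = c"
      using N[of J "\<lambda>u v. ((w u, v) \<in> edges G, (w v, u) \<in> edges G, (w u, w v) \<in> edges G)"]
        \<open>finite J\<close> \<open>N \<le> card J\<close> by blast
    obtain \<beta>1 \<beta>2 \<beta>3 where c: "c = (\<beta>1, \<beta>2, \<beta>3)"
      by (cases c) auto
    have sJ: "s i \<in> J" if "i \<le> n" for i
      using s(2) that by auto
    show "\<exists>F\<in>unavoidable_graphs n. induced_sub F G"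
    proof (rule pendant_sequence_unavoidable[where \<beta> = \<beta>1 and \<gamma> = \<beta>2 and \<delta> = \<beta>3, OF G _ _ _ s(1)])
      show "x \<in> verts G" "s ` {..n} \<subseteq> verts G" "(\<lambda>i. w (s i)) ` {..n} \<subseteq> verts G"
        using J_nbhd sJ w x_nbhd[OF sJ[of 0]] by (auto simp: nbhd_def)
      show "(x, s i) \<in> edges G" if "i \<le> n" for i
        using J_nbhd sJ[OF that] by (auto simp: nbhd_def)
      show "(x, w (s i)) \<notin> edges G \<and> x \<noteq> w (s i)" if "i \<le> n" for i
        using unlinked_nonadjacent[of x "w (s i)" G "s i" x] w x_nbhd sJ[OF that] by blast
      show "(s i, s j) \<notin> edges G" if "i \<le> n" "j \<le> n" for i j
        using indep sJ[OF that(1)] sJ[OF that(2)] wf_graph_edge_irrefl[OF G]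
        by (cases "s i = s j") (auto simp: pairwise_def)
      show "(w (s i), s i) \<in> edges G" if "i \<le> n" for i
        using w[OF sJ[OF that]] wf_graph_edge_sym[OF G] by (auto simp: nbhd_def)
    qed (use hom in \<open>auto simp: c\<close>)
  qed
qed

lemma independent_pendant_pairs_unavoidable:
  assumes G: "wf_graph G" and k: "n + 2 \<le> k"
    and verts: "s ` {..<k} \<subseteq> verts G" "a ` {..<k} \<subseteq> verts G" "b ` {..<k} \<subseteq> verts G"
    and ss: "\<And>i j. i < k \<Longrightarrow> j < k \<Longrightarrow> (s i, s j) \<notin> edges G"
    and as: "\<And>i j. i < k \<Longrightarrow> j < k \<Longrightarrow> (a i, s j) \<in> edges G \<longleftrightarrow> i = j"
    and bs: "\<And>i j. i < k \<Longrightarrow> j < k \<Longrightarrow> (b i, s j) \<in> edges G \<longleftrightarrow> i = j"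
    and ab: "\<And>i. i < k \<Longrightarrow> (a i, b i) \<notin> edges G \<and> a i \<noteq> b i"
    and aa: "\<And>i j. i < k \<Longrightarrow> j < k \<Longrightarrow> (a i, a j) \<notin> edges G"
    and bb: "\<And>i j. i < k \<Longrightarrow> j < k \<Longrightarrow> (b i, b j) \<notin> edges G"
    and ab_cross: "\<And>i j. i < j \<Longrightarrow> j < k \<Longrightarrow> (a i, b j) \<in> edges G \<longleftrightarrow> \<beta>"
    and ba_cross: "\<And>i j. i < j \<Longrightarrow> j < k \<Longrightarrow> (b i, a j) \<in> edges G \<longleftrightarrow> \<gamma>"
  shows "\<exists>F\<in>unavoidable_graphs n. induced_sub F G"
proof -
  have sym: "(x, y) \<in> edges G \<longleftrightarrow> (y, x) \<in> edges G" for x y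
    using wf_graph_edge_sym[OF G] by blast
  have inj: "a i = a j \<longleftrightarrow> i = j" "b i = b j \<longleftrightarrow> i = j" if "i < k" "j < k" for i j
    using as[of i i] bs[of i i] as[of j i] bs[of j i] that by metis+
  have small: "i < k" "i < k - 1" "i < k - 2" if "i < n" for i
    using that k by auto
  have top: "k - 1 < k" "k - 2 < k" "k - 2 < k - 1"
    using k by auto
  have restrict: "f ` {..<n} \<subseteq> verts G" if "f ` {..<k} \<subseteq> verts G" for f :: "nat \<Rightarrow> 'a"
    using that k by auto
  show ?thesis
  proof (cases "\<beta> \<or> \<gamma>")
    case True
    have "induced_sub (K2n n) G"
      using True
    proof
      assume \<beta>
      show ?thesis
        by (rule K2n_induced_subI[OF G, of "b (k - 1)" "b (k - 2)" a])
          (use verts(2,3) top small inj aa bb ab_cross[of _ "k - 1"] ab_cross[of _ "k - 2"] \<open>\<beta>\<close> sym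
            in \<open>auto simp: inj_on_def\<close>)
    next
      assume \<gamma>
      show ?thesis
        by (rule K2n_induced_subI[OF G, of "a (k - 1)" "a (k - 2)" b])
          (use verts(2,3) top small inj aa bb ba_cross[of _ "k - 1"] ba_cross[of _ "k - 2"] \<open>\<gamma>\<close> sym
            in \<open>auto simp: inj_on_def\<close>)
    qed
    then show ?thesis
      by (auto simp: unavoidable_graphs_def)
  next
    case False
    have ab': "(a i, b j) \<notin> edges G" if "i < k" "j < k" for i j
      using ab[of i] ab_cross[of i j] ba_cross[of j i] False sym that
      by (cases i j rule: linorder_cases) auto
    have "induced_sub (nP3 n) G"
    proof (rule nP3_induced_subI[OF G restrict[OF verts(2)] restrict[OF verts(1)]
          restrict[OF verts(3)]])
      show "(s i, a i) \<in> edges G" "(s i, b i) \<in> edges G" "(a i, b i) \<notin> edges G \<and> a i \<noteq> b i"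
        if "i < n" for i
        using as bs ab sym small[OF that] by auto
      show "(x, y) \<notin> edges G"
        if "i < n" "j < n" "i \<noteq> j" "x \<in> {a i, s i, b i}" "y \<in> {a j, s j, b j}" for i j x y
        using that small aa bb as bs ss ab' sym by auto
    qed
    then show ?thesis
      by (auto simp: unavoidable_graphs_def)
  qed
qed

lemma pendant_pairs_unavoidable:
  assumes G: "wf_graph G" and k: "n + 2 \<le> k"
    and verts: "s ` {..<k} \<subseteq> verts G" "a ` {..<k} \<subseteq> verts G" "b ` {..<k} \<subseteq> verts G"
    and ss: "\<And>i j. i < k \<Longrightarrow> j < k \<Longrightarrow> (s i, s j) \<notin> edges G"
    and as: "\<And>i j. i < k \<Longrightarrow> j < k \<Longrightarrow> (a i, s j) \<in> edges G \<longleftrightarrow> i = j"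
    and bs: "\<And>i j. i < k \<Longrightarrow> j < k \<Longrightarrow> (b i, s j) \<in> edges G \<longleftrightarrow> i = j"
    and ab: "\<And>i. i < k \<Longrightarrow> (a i, b i) \<notin> edges G \<and> a i \<noteq> b i"
    and aa: "\<And>i j. i < j \<Longrightarrow> j < k \<Longrightarrow> (a i, a j) \<in> edges G \<longleftrightarrow> \<beta>1"
    and bb: "\<And>i j. i < j \<Longrightarrow> j < k \<Longrightarrow> (b i, b j) \<in> edges G \<longleftrightarrow> \<beta>2"
    and ab_cross: "\<And>i j. i < j \<Longrightarrow> j < k \<Longrightarrow> (a i, b j) \<in> edges G \<longleftrightarrow> \<beta>3"
    and ba_cross: "\<And>i j. i < j \<Longrightarrow> j < k \<Longrightarrow> (b i, a j) \<in> edges G \<longleftrightarrow> \<beta>4"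
  shows "\<exists>F\<in>unavoidable_graphs n. induced_sub F G"
proof -
  have aa': "(a i, a j) \<in> edges G \<longleftrightarrow> i \<noteq> j \<and> \<beta>1" and bb': "(b i, b j) \<in> edges G \<longleftrightarrow> i \<noteq> j \<and> \<beta>2"
    if "i < k" "j < k" for i j
    using homogeneous_edges_sym[where x = a, OF G aa] homogeneous_edges_sym[where x = b, OF G bb]
      that wf_graph_edge_irrefl[OF G] by (cases "i = j"; auto)+
  have ne_s: "a i \<noteq> s j" "b i \<noteq> s j" if "i < k" "j < k" for i j
    using as[of i i] bs[of i i] ss[of j i] that by metis+
  have restrict: "f ` {..<n} \<subseteq> verts G" if "f ` {..<k} \<subseteq> verts G" for f :: "nat \<Rightarrow> 'a"
    using that k by auto
  have small: "i < k" if "i < n" for i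
    using that k by auto
  consider "\<beta>1" | "\<beta>2" | "\<not> \<beta>1" "\<not> \<beta>2"
    by blast
  then show ?thesis
  proof cases
    case 1
    show ?thesis
      by (rule matched_clique_unavoidable[where \<beta> = False,
            OF G restrict[OF verts(2)] restrict[OF verts(1)]])
        (use aa' as ss ne_s 1 small in auto)
  next
    case 2
    show ?thesis
      by (rule matched_clique_unavoidable[where \<beta> = False,
            OF G restrict[OF verts(3)] restrict[OF verts(1)]])
        (use bb' bs ss ne_s 2 small in auto)
  next
    case 3
    show ?thesis
      by (rule independent_pendant_pairs_unavoidable[OF G k verts ss as bs ab _ _ ab_cross
            ba_cross])
        (use aa' bb' 3 in auto)
  qed
qed

lemma independent_bad_verts_unavoidable:
  obtains R where "\<And>(G :: 'a graph) I. wf_graph G \<Longrightarrow> I \<subseteq> bad_verts G \<Longrightarrow> finite I \<Longrightarrow> R \<le> card I \<Longrightarrow>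
    pairwise (\<lambda>u v. (u, v) \<notin> edges G) I \<Longrightarrow> \<exists>F\<in>unavoidable_graphs n. induced_sub F G"
proof -
  obtain R0 where R0: "\<And>(G :: 'a graph) x J. wf_graph G \<Longrightarrow> J \<subseteq> bad_verts G \<Longrightarrow> finite J \<Longrightarrow>
    R0 \<le> card J \<Longrightarrow> pairwise (\<lambda>u v. (u, v) \<notin> edges G) J \<Longrightarrow> J \<subseteq> nbhd G x \<Longrightarrow>
    \<exists>F\<in>unavoidable_graphs n. induced_sub F G"
    using common_nbr_independent_bad_verts_unavoidable by blast
  define k where "k = max (R0 + 1) (n + 2)"
  obtain N where N: "\<And>(S :: 'a set)
      (col :: 'a \<Rightarrow> 'a \<Rightarrow> (bool \<times> bool \<times> bool \<times> bool) \<times> (bool \<times> bool \<times> bool \<times> bool)).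
    finite S \<Longrightarrow> N \<le> card S \<Longrightarrow>
    \<exists>s c. inj_on s {..<k} \<and> s ` {..<k} \<subseteq> S \<and> (\<forall>i j. i < j \<longrightarrow> j < k \<longrightarrow> col (s i) (s j) = c)"
    using ramsey_homogeneous_sequence[where k = k] by blast
  show ?thesis
  proof (rule that[of N])
    fix G :: "'a graph" and I
    assume G: "wf_graph G" and bad: "I \<subseteq> bad_verts G" and "finite I" "N \<le> card I"
      and indep: "pairwise (\<lambda>u v. (u, v) \<notin> edges G) I"
    obtain a b where ab: "\<And>v. v \<in> I \<Longrightarrow>
        a v \<in> nbhd G v \<and> b v \<in> nbhd G v \<and> (a v, b v) \<notin> edges G \<and> a v \<noteq> b v"
      using bad_verts_nonadjacent_nbr_pairs[OF G bad] by blast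
    obtain s c where s: "inj_on s {..<k}" "s ` {..<k} \<subseteq> I"
      and hom: "\<forall>i j. i < j \<longrightarrow> j < k \<longrightarrow>
        (((a (s i), s j) \<in> edges G, (b (s i), s j) \<in> edges G,
          (a (s j), s i) \<in> edges G, (b (s j), s i) \<in> edges G),
         ((a (s i), a (s j)) \<in> edges G, (b (s i), b (s j)) \<in> edges G, (a (s i), b (s j)) \<in> edges G,
          (b (s i), a (s j)) \<in> edges G)) = c"
      using N[of I "\<lambda>u v. (((a u, v) \<in> edges G, (b u, v) \<in> edges G,
          (a v, u) \<in> edges G, (b v, u) \<in> edges G),
         ((a u, a v) \<in> edges G, (b u, b v) \<in> edges G, (a u, b v) \<in> edges G, (b u, a v) \<in> edges G))"]
        \<open>finite I\<close> \<open>N \<le> card I\<close> by blast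
    obtain \<beta>1 \<beta>2 \<beta>3 \<beta>4 \<beta>5 \<beta>6 \<beta>7 \<beta>8 where c: "c = ((\<beta>1, \<beta>2, \<beta>3, \<beta>4), (\<beta>5, \<beta>6, \<beta>7, \<beta>8))"
      by (cases c) auto
    have sI: "s i \<in> I" if "i < k" for i
      using s(2) that by auto
    have s_verts: "s ` {..<k} \<subseteq> verts G"
      using sI bad by (auto simp: bad_verts_def)
    have star: "\<exists>F\<in>unavoidable_graphs n. induced_sub F G"
      if "A \<subseteq> {..<k}" "R0 \<le> card A" "s ` A \<subseteq> nbhd G y" for y A
    proof (rule R0[OF G _ _ _ _ that(3)])
      have "s ` A \<subseteq> I"
        using that(1) sI by auto
      then show "s ` A \<subseteq> bad_verts G" "finite (s ` A)" "pairwise (\<lambda>u v. (u, v) \<notin> edges G) (s ` A)"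
        using bad indep \<open>finite I\<close> by (auto intro: pairwise_subset finite_subset)
      show "R0 \<le> card (s ` A)"
        using that(1,2) card_image inj_on_subset[OF s(1)] by metis
    qed
    show "\<exists>F\<in>unavoidable_graphs n. induced_sub F G"
    proof (cases "\<beta>1 \<or> \<beta>2 \<or> \<beta>3 \<or> \<beta>4")
      case True
      have card: "R0 \<le> card {1..<k}" "R0 \<le> card {..<k - 1}" "{1..<k} \<subseteq> {..<k}" "{..<k - 1} \<subseteq> {..<k}"
        by (auto simp: k_def)
      have nbhd_later: "s ` {1..<k} \<subseteq> nbhd G y" if "\<forall>j\<in>{1..<k}. (y, s j) \<in> edges G" for y
        using that s_verts by (auto simp: nbhd_def)
      have nbhd_earlier: "s ` {..<k - 1} \<subseteq> nbhd G y" if "\<forall>j\<in>{..<k - 1}. (y, s j) \<in> edges G" for y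
        using that s_verts by (auto simp: nbhd_def)
      have hom_star: "\<forall>j\<in>{1..<k}. (a (s 0), s j) \<in> edges G \<longleftrightarrow> \<beta>1"
        "\<forall>j\<in>{1..<k}. (b (s 0), s j) \<in> edges G \<longleftrightarrow> \<beta>2"
        "\<forall>j\<in>{..<k - 1}. (a (s (k - 1)), s j) \<in> edges G \<longleftrightarrow> \<beta>3"
        "\<forall>j\<in>{..<k - 1}. (b (s (k - 1)), s j) \<in> edges G \<longleftrightarrow> \<beta>4"
        using hom unfolding c by auto
      from True show ?thesis
        by (elim disjE)
          (use star[OF card(3,1) nbhd_later] star[OF card(4,2) nbhd_earlier] hom_star in blast)+
    next
      case False
      show ?thesis
      proof (rule pendant_pairs_unavoidable[OF G _ s_verts])
        show "n + 2 \<le> k"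
          by (simp add: k_def)
        show "(\<lambda>i. a (s i)) ` {..<k} \<subseteq> verts G" "(\<lambda>i. b (s i)) ` {..<k} \<subseteq> verts G"
          using ab sI by (auto simp: nbhd_def)
        show "(s i, s j) \<notin> edges G" if "i < k" "j < k" for i j
          using indep sI[OF that(1)] sI[OF that(2)] wf_graph_edge_irrefl[OF G]
          by (cases "s i = s j") (auto simp: pairwise_def)
        have self: "(a (s i), s i) \<in> edges G" "(b (s i), s i) \<in> edges G" if "i < k" for i
          using ab[OF sI[OF that]] wf_graph_edge_sym[OF G] by (auto simp: nbhd_def)
        show "(a (s i), s j) \<in> edges G \<longleftrightarrow> i = j" "(b (s i), s j) \<in> edges G \<longleftrightarrow> i = j"
          if "i < k" "j < k" for i j
          using self[OF that(1)] hom[rule_format, of i j] hom[rule_format, of j i] False that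
          unfolding c by (cases i j rule: linorder_cases; auto)+
        show "(a (s i), b (s i)) \<notin> edges G \<and> a (s i) \<noteq> b (s i)" if "i < k" for i
          using ab sI that by blast
      qed (use hom in \<open>auto simp: c\<close>)
    qed
  qed
qed

lemma many_bad_verts_unavoidable:
  obtains N where "\<And>G :: 'a graph. wf_graph G \<Longrightarrow> N \<le> card (bad_verts G) \<Longrightarrow>
    \<exists>F\<in>unavoidable_graphs n. induced_sub F G"
proof -
  obtain RC where RC: "\<And>(G :: 'a graph) K. wf_graph G \<Longrightarrow> K \<subseteq> bad_verts G \<Longrightarrow> finite K \<Longrightarrow> RC \<le> card K \<Longrightarrow>
    pairwise (\<lambda>u v. (u, v) \<in> edges G) K \<Longrightarrow> \<exists>F\<in>unavoidable_graphs n. induced_sub F G"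
    using clique_bad_verts_unavoidable by blast
  obtain RI where RI: "\<And>(G :: 'a graph) I. wf_graph G \<Longrightarrow> I \<subseteq> bad_verts G \<Longrightarrow> finite I \<Longrightarrow> RI \<le> card I \<Longrightarrow>
    pairwise (\<lambda>u v. (u, v) \<notin> edges G) I \<Longrightarrow> \<exists>F\<in>unavoidable_graphs n. induced_sub F G"
    using independent_bad_verts_unavoidable by blast
  define k where "k = max RC RI"
  obtain N where N: "\<And>(S :: 'a set) (col :: 'a \<Rightarrow> 'a \<Rightarrow> bool). finite S \<Longrightarrow> N \<le> card S \<Longrightarrow>
    \<exists>s c. inj_on s {..<k} \<and> s ` {..<k} \<subseteq> S \<and> (\<forall>i j. i < j \<longrightarrow> j < k \<longrightarrow> col (s i) (s j) = c)"
    using ramsey_homogeneous_sequence[where k = k] by blast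
  show ?thesis
  proof (rule that[of N])
    fix G :: "'a graph"
    assume G: "wf_graph G" and "N \<le> card (bad_verts G)"
    then obtain s \<beta> where s: "inj_on s {..<k}" "s ` {..<k} \<subseteq> bad_verts G"
      and hom: "\<And>i j. i < j \<Longrightarrow> j < k \<Longrightarrow> (s i, s j) \<in> edges G \<longleftrightarrow> \<beta>"
      using N[of "bad_verts G" "\<lambda>u v. (u, v) \<in> edges G"] finite_bad_verts[OF G] by blast
    have card: "RC \<le> card (s ` {..<k})" "RI \<le> card (s ` {..<k})"
      using card_image[OF s(1)] by (simp_all add: k_def)
    have "pairwise (\<lambda>u v. (u, v) \<in> edges G \<longleftrightarrow> \<beta>) (s ` {..<k})"
      unfolding pairwise_image
      by (rule pairwiseI) (use homogeneous_edges_sym[where x = s, OF G hom] in blast)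
    then show "\<exists>F\<in>unavoidable_graphs n. induced_sub F G"
    proof (cases \<beta>)
      case True
      then show ?thesis
        using RC[OF G s(2) _ card(1)] \<open>pairwise _ _\<close> by simp
    next
      case False
      then show ?thesis
        using RI[OF G s(2) _ card(2)] \<open>pairwise _ _\<close> by simp
    qed
  qed
qed

section \<open>The obstructions have many bad vertices\<close>

lemma wf_graph_obstructions:
  "wf_graph (Kstar n)" "wf_graph (nP3 n)" "wf_graph (K1nstar n)" "wf_graph (K2n n)"
  "wf_graph (CK n)" "wf_graph (Tn n)"
  by (simp_all add: Kstar_def nP3_def K1nstar_def K2n_def CK_def Tn_def wf_graph_mk_graph)

lemma card_bad_verts_Kstar:
  assumes "2 \<le> n"
  shows "n \<le> card (bad_verts (Kstar n))"
proof -
  have "{..<n} \<subseteq> bad_verts (Kstar n)"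
  proof
    fix i assume i: "i \<in> {..<n}"
    show "i \<in> bad_verts (Kstar n)"
      unfolding Kstar_def
      by (rule mk_graph_bad_vertI[where a = "i + n" and b = "if i = 0 then 1 else 0"])
        (use i assms in auto)
  qed
  from card_mono[OF finite_bad_verts[OF wf_graph_obstructions(1)] this] show ?thesis
    by simp
qed

lemma card_bad_verts_nP3: "n \<le> card (bad_verts (nP3 n))"
proof -
  have "(\<lambda>i. 3 * i + 1) ` {..<n} \<subseteq> bad_verts (nP3 n)"
  proof
    fix v assume "v \<in> (\<lambda>i. 3 * i + 1) ` {..<n}"
    then obtain i where i: "i < n" "v = 3 * i + 1"
      by blast
    have div_mod: "(3 * i) div 3 = i" "(3 * i + 1) div 3 = i" "(3 * i + 2) div 3 = i"
      "(3 * i) mod 3 = 0" "(3 * i + 1) mod 3 = 1" "(3 * i + 2) mod 3 = 2"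
      by presburger+
    have middle_unique: False if "u div 3 = i" "u mod 3 = 1" "u \<noteq> 3 * i + 1" for u
      using that div_mult_mod_eq[of u 3] by simp
    show "v \<in> bad_verts (nP3 n)"
      unfolding nP3_def i(2)
      by (rule mk_graph_bad_vertI[where a = "3 * i" and b = "3 * i + 2"])
        (use i(1) div_mod middle_unique in auto)
  qed
  from card_mono[OF finite_bad_verts[OF wf_graph_obstructions(2)] this] show ?thesis
    by (simp add: card_image inj_on_def)
qed

lemma card_bad_verts_K1nstar: "n \<le> card (bad_verts (K1nstar n))"
proof -
  have "{1..n} \<subseteq> bad_verts (K1nstar n)"
  proof
    fix i assume i: "i \<in> {1..n}"
    show "i \<in> bad_verts (K1nstar n)"
      unfolding K1nstar_def
      by (rule mk_graph_bad_vertI[where a = "i + n" and b = "0"]) (use i in auto)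
  qed
  from card_mono[OF finite_bad_verts[OF wf_graph_obstructions(3)] this] show ?thesis
    by simp
qed

lemma card_bad_verts_K2n: "n \<le> card (bad_verts (K2n n))"
proof -
  have "{2..n + 1} \<subseteq> bad_verts (K2n n)"
  proof
    fix i assume i: "i \<in> {2..n + 1}"
    show "i \<in> bad_verts (K2n n)"
      unfolding K2n_def
      by (rule mk_graph_bad_vertI[where a = "0" and b = "1"]) (use i in auto)
  qed
  from card_mono[OF finite_bad_verts[OF wf_graph_obstructions(4)] this] show ?thesis
    by simp
qed

lemma card_bad_verts_CK:
  assumes "2 \<le> n"
  shows "n \<le> card (bad_verts (CK n))"
proof -
  have "{..<n} \<subseteq> bad_verts (CK n)"
  proof
    fix i assume i: "i \<in> {..<n}"
    show "i \<in> bad_verts (CK n)"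
      unfolding CK_def
      by (rule mk_graph_bad_vertI[where a = "i + n" and b = "if i = 0 then 1 else 0"])
        (use i assms in auto)
  qed
  from card_mono[OF finite_bad_verts[OF wf_graph_obstructions(5)] this] show ?thesis
    by simp
qed

lemma card_bad_verts_Tn: "n \<le> card (bad_verts (Tn n))"
proof -
  have "{n..<2 * n} \<subseteq> bad_verts (Tn n)"
  proof
    fix i assume i: "i \<in> {n..<2 * n}"
    show "i \<in> bad_verts (Tn n)"
      unfolding Tn_def
      by (rule mk_graph_bad_vertI[where a = "2 * n" and b = "0"]) (use i in auto)
  qed
  from card_mono[OF finite_bad_verts[OF wf_graph_obstructions(6)] this] show ?thesis
    by simp
qed

lemma obstructions_many_bad_verts:
  assumes "2 \<le> n" "F \<in> {Kstar n, nP3 n, K1nstar n, K2n n, CK n, Tn n}"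
  shows "wf_graph F \<and> n \<le> card (bad_verts F)"
  using assms(2) wf_graph_obstructions card_bad_verts_Kstar[OF assms(1)] card_bad_verts_nP3
    card_bad_verts_K1nstar card_bad_verts_K2n card_bad_verts_CK[OF assms(1)] card_bad_verts_Tn
  by blast

lemma family_le_obstructions_if_bad_verts_bounded:
  assumes bounded: "\<And>G :: nat graph. wf_graph G \<Longrightarrow> H_free \<H> G \<Longrightarrow> card (bad_verts G) < c"
    and "2 \<le> n" "c \<le> n"
  shows "family_le \<H> {Kstar n, nP3 n, K1nstar n, K2n n, CK n, Tn n}"
  unfolding family_le_def
proof
  fix F assume "F \<in> {Kstar n, nP3 n, K1nstar n, K2n n, CK n, Tn n}"
  then have "wf_graph F" "c \<le> card (bad_verts F)"
    using obstructions_many_bad_verts[OF assms(2)] assms(3) by fastforce+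
  then have "\<not> H_free \<H> F"
    using bounded[of F] by fastforce
  then show "\<exists>H\<in>\<H>. induced_sub H F"
    by (simp add: H_free_def)
qed

lemma bad_verts_bounded_if_family_le:
  assumes "family_le \<H> {Kstar n, nP3 n, K1nstar n, K2n n, CK n, Tn n}"
  obtains c where "\<And>G :: 'a graph. wf_graph G \<Longrightarrow> H_free \<H> G \<Longrightarrow> card (bad_verts G) < c"
proof -
  obtain N where N: "\<And>G :: 'a graph. wf_graph G \<Longrightarrow> N \<le> card (bad_verts G) \<Longrightarrow>
      \<exists>F\<in>unavoidable_graphs n. induced_sub F G"
    using many_bad_verts_unavoidable by blast
  have "card (bad_verts G) < N" if G: "wf_graph G" and free: "H_free \<H> G" for G :: "'a graph"
  proof (rule ccontr)
    assume "\<not> card (bad_verts G) < N"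
    then obtain F where F: "F \<in> unavoidable_graphs n" "induced_sub F G"
      using N[OF G] by auto
    then obtain H where "H \<in> \<H>" "induced_sub H F"
      using assms unfolding family_le_def unavoidable_graphs_def by blast
    then show False
      using free induced_sub_trans[OF _ F(2)] unfolding H_free_def by blast
  qed
  then show ?thesis
    using that by blast
qed

theorem corollary1p10:
  fixes \<H> :: "nat graph set"
  assumes "\<forall>H\<in>\<H>. wf_graph H"
  shows "(\<exists>c::nat. \<forall>G::nat graph. wf_graph G \<and> H_free \<H> G \<longrightarrow>
            card {v \<in> verts G. card (components (induced G (nbhd G v))) \<ge> 2} < c)
     \<longleftrightarrow> (\<exists>n::nat. n > 0 \<and>
            family_le \<H> {Kstar n, nP3 n, K1nstar n, K2n n, CK n, Tn n})"
  unfolding bad_verts_def[symmetric]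
proof
  assume "\<exists>c. \<forall>G::nat graph. wf_graph G \<and> H_free \<H> G \<longrightarrow> card (bad_verts G) < c"
  then obtain c where "\<And>G::nat graph. wf_graph G \<Longrightarrow> H_free \<H> G \<Longrightarrow> card (bad_verts G) < c"
    by blast
  then have "family_le \<H>
      {Kstar (c + 2), nP3 (c + 2), K1nstar (c + 2), K2n (c + 2), CK (c + 2), Tn (c + 2)}"
    by (rule family_le_obstructions_if_bad_verts_bounded) simp_all
  then show "\<exists>n>0. family_le \<H> {Kstar n, nP3 n, K1nstar n, K2n n, CK n, Tn n}"
    by (intro exI[of _ "c + 2"]) simp
next
  assume "\<exists>n>0. family_le \<H> {Kstar n, nP3 n, K1nstar n, K2n n, CK n, Tn n}"
  then obtain c where "\<And>G :: nat graph. wf_graph G \<Longrightarrow> H_free \<H> G \<Longrightarrow> card (bad_verts G) < c"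
    using bad_verts_bounded_if_family_le by blast
  then show "\<exists>c. \<forall>G::nat graph. wf_graph G \<and> H_free \<H> G \<longrightarrow> card (bad_verts G) < c"
    by blast
qed

end
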